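(* If $G$ is a Tutte-Berge graph, then the induced subgraph of $G$ on $D(G)$ has no edges, i.e. $D(G)$ consists of isolated vertices only.
   Context: $\nu(G)$ is the matching number of $G$. For $U\subseteq V(G)$, $N_G(U)$ is the set of vertices adjacent to at least one vertex of $U$. $G$ is a Tutte-Berge graph if there exists an independent set $T$ of $G$ with $|T| = |N_G(T)| + |V(G)| - 2\nu(G)$. $D(G)$ is the set of vertices of $G$ left uncovered by at least one maximum matching of $G$. *)

theory Defs
  imports Main
begin

definition graph :: "'a set \<Rightarrow> ('a \<Rightarrow> 'a \<Rightarrow> bool) \<Rightarrow> bool" where
  "graph V E \<longleftrightarrow> finite V \<and> (\<forall>u v. E u v \<longrightarrow> E v u)
     \<and> (\<forall>u. \<not> E u u) \<and> (\<forall>u v. E u v \<longrightarrow> u \<in> V \<and> v \<in> V)"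

definition matching :: "'a set \<Rightarrow> ('a \<Rightarrow> 'a \<Rightarrow> bool) \<Rightarrow> 'a set set \<Rightarrow> bool" where
  "matching V E M \<longleftrightarrow> (\<forall>e\<in>M. \<exists>u v. e = {u, v} \<and> E u v)
     \<and> (\<forall>e\<in>M. \<forall>f\<in>M. e \<noteq> f \<longrightarrow> e \<inter> f = {})"

definition matching_number :: "'a set \<Rightarrow> ('a \<Rightarrow> 'a \<Rightarrow> bool) \<Rightarrow> nat" where
  "matching_number V E = Max {card M | M. matching V E M}"

definition max_matching :: "'a set \<Rightarrow> ('a \<Rightarrow> 'a \<Rightarrow> bool) \<Rightarrow> 'a set set \<Rightarrow> bool" where
  "max_matching V E M \<longleftrightarrow> matching V E M \<and> card M = matching_number V E"

definition nbhd :: "'a set \<Rightarrow> ('a \<Rightarrow> 'a \<Rightarrow> bool) \<Rightarrow> 'a set \<Rightarrow> 'a set" where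
  "nbhd V E U = {v \<in> V. \<exists>u\<in>U. E u v}"

definition independent :: "'a set \<Rightarrow> ('a \<Rightarrow> 'a \<Rightarrow> bool) \<Rightarrow> 'a set \<Rightarrow> bool" where
  "independent V E T \<longleftrightarrow> T \<subseteq> V \<and> (\<forall>u\<in>T. \<forall>v\<in>T. \<not> E u v)"

definition tutte_berge_graph :: "'a set \<Rightarrow> ('a \<Rightarrow> 'a \<Rightarrow> bool) \<Rightarrow> bool" where
  "tutte_berge_graph V E \<longleftrightarrow> (\<exists>T. independent V E T \<and>
     int (card T) = int (card (nbhd V E T)) + int (card V) - 2 * int (matching_number V E))"

definition D_set :: "'a set \<Rightarrow> ('a \<Rightarrow> 'a \<Rightarrow> bool) \<Rightarrow> 'a set" where
  "D_set V E = {v \<in> V. \<exists>M. max_matching V E M \<and> v \<notin> \<Union>M}"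

end

theory Submission
  imports Defs
begin

text \<open>Let \<open>T\<close> witness the Tutte-Berge equality and let \<open>M\<close> be a maximum matching. Every
  \<open>M\<close>-matched vertex of \<open>T\<close> has its partner in \<open>N(T)\<close>, injectively, so at least
  \<open>|T| - |N(T)| = |V| - 2\<nu>(G)\<close> vertices of \<open>T\<close> are unmatched. These are all the unmatched
  vertices, hence every vertex missed by a maximum matching lies in the independent set \<open>T\<close>.\<close>

lemma graph_finite: "graph V E \<Longrightarrow> finite V"
  unfolding graph_def by simp

lemma graph_edge_sym: "graph V E \<Longrightarrow> E u v \<Longrightarrow> E v u"
  unfolding graph_def by blast

lemma graph_edge_neq: "graph V E \<Longrightarrow> E u v \<Longrightarrow> u \<noteq> v"
  unfolding graph_def by blast

lemma graph_edge_in_vertices: "graph V E \<Longrightarrow> E u v \<Longrightarrow> u \<in> V \<and> v \<in> V"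
  unfolding graph_def by blast

lemma finite_nbhd: "graph V E \<Longrightarrow> finite (nbhd V E U)"
  unfolding nbhd_def by (simp add: graph_finite)

lemma matching_edge:
  assumes "matching V E M" "e \<in> M"
  obtains u v where "e = {u, v}" "E u v"
  using assms unfolding matching_def by meson

lemma matching_disjoint:
  assumes "matching V E M" "e \<in> M" "f \<in> M" "e \<noteq> f"
  shows "e \<inter> f = {}"
  using assms unfolding matching_def by simp

lemma matching_edge_card:
  assumes "graph V E" "matching V E M" "e \<in> M"
  shows "card e = 2"
  using assms(2,3) by (rule matching_edge) (simp add: graph_edge_neq[OF assms(1)])

lemma matching_Union_subset:
  assumes "graph V E" "matching V E M"
  shows "\<Union>M \<subseteq> V"
proof
  fix x assume "x \<in> \<Union>M"
  then obtain e where "e \<in> M" "x \<in> e" by blast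
  moreover obtain u v where "e = {u, v}" "E u v"
    using assms(2) \<open>e \<in> M\<close> by (rule matching_edge)
  ultimately show "x \<in> V" using graph_edge_in_vertices[OF assms(1)] by auto
qed

lemma card_Union_matching:
  assumes "graph V E" "matching V E M"
  shows "card (\<Union>M) = 2 * card M"
proof -
  have "card (\<Union>M) = (\<Sum>e\<in>M. card e)"
  proof (rule card_Union_disjoint)
    show "pairwise disjnt M"
      using matching_disjoint[OF assms(2)] unfolding pairwise_def disjnt_def by blast
    show "finite e" if "e \<in> M" for e
      using matching_edge_card[OF assms that] by (simp add: card_ge_0_finite)
  qed
  also have "\<dots> = 2 * card M"
    using matching_edge_card[OF assms] by simp
  finally show ?thesis .
qed

lemma matching_partner:
  assumes "graph V E" "matching V E M" "t \<in> \<Union>M"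
  shows "\<exists>w. {t, w} \<in> M \<and> E t w"
proof -
  obtain e where "e \<in> M" "t \<in> e" using assms(3) by blast
  then obtain a b where "{a, b} \<in> M" "E a b" "t = a \<or> t = b"
    using assms(2) by (elim matching_edge) auto
  then show ?thesis
    using graph_edge_sym[OF assms(1)] by (auto simp: insert_commute)
qed

lemma card_matched_le_card_nbhd:
  assumes "graph V E" "matching V E M"
  shows "card (T \<inter> \<Union>M) \<le> card (nbhd V E T)"
proof -
  define partner where "partner t = (SOME w. {t, w} \<in> M \<and> E t w)" for t
  have partner: "{t, partner t} \<in> M \<and> E t (partner t)" if "t \<in> \<Union>M" for t
    unfolding partner_def by (rule someI_ex) (rule matching_partner[OF assms that])
  have "inj_on partner (T \<inter> \<Union>M)"
  proof (rule inj_onI)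
    fix x y assume "x \<in> T \<inter> \<Union>M" "y \<in> T \<inter> \<Union>M" and same: "partner x = partner y"
    then have edges: "{x, partner x} \<in> M" "{y, partner y} \<in> M" "E x (partner x)"
      using partner[of x] partner[of y] by simp_all
    have "{x, partner x} = {y, partner y}"
      using matching_disjoint[OF assms(2) edges(1,2)] same by blast
    then have "x \<in> {y, partner y}" by blast
    moreover have "x \<noteq> partner y"
      using graph_edge_neq[OF assms(1) edges(3)] same by simp
    ultimately show "x = y" by simp
  qed
  moreover have "partner ` (T \<inter> \<Union>M) \<subseteq> nbhd V E T"
    unfolding nbhd_def using partner graph_edge_in_vertices[OF assms(1)] by blast
  ultimately show ?thesis
    using finite_nbhd[OF assms(1)] by (rule card_inj_on_le)
qed

lemma unmatched_subset_tutte_berge_witness: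
  assumes g: "graph V E" and TV: "T \<subseteq> V"
    and tb: "int (card T) = int (card (nbhd V E T)) + int (card V) - 2 * int (matching_number V E)"
    and "max_matching V E M"
  shows "V - \<Union>M \<subseteq> T"
proof -
  have M: "matching V E M" "card M = matching_number V E"
    using \<open>max_matching V E M\<close> unfolding max_matching_def by auto
  have finV: "finite V" using graph_finite[OF g] .
  have UV: "\<Union>M \<subseteq> V" using matching_Union_subset[OF g M(1)] .
  have finT: "finite T" using finite_subset[OF TV finV] .
  have "card (V - \<Union>M) = card V - card (\<Union>M)"
    using UV finV by (simp add: card_Diff_subset finite_subset)
  moreover have "card (\<Union>M) \<le> card V" using card_mono[OF finV UV] .
  moreover have "card (T - \<Union>M) = card T - card (T \<inter> \<Union>M)"
    using finT by (simp add: card_Diff_subset_Int)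
  moreover have "card (T \<inter> \<Union>M) \<le> card T" using finT by (simp add: card_mono)
  ultimately have "card (V - \<Union>M) \<le> card (T - \<Union>M)"
    using tb M card_matched_le_card_nbhd[OF g M(1), of T] card_Union_matching[OF g M(1)]
    by linarith
  moreover have "T - \<Union>M \<subseteq> V - \<Union>M" using TV by blast
  ultimately have "T - \<Union>M = V - \<Union>M"
    using finV by (intro card_seteq) auto
  then show ?thesis by blast
qed

theorem lemma2p10:
  assumes "graph V E" and "tutte_berge_graph V E"
  shows "\<forall>u\<in>D_set V E. \<forall>v\<in>D_set V E. \<not> E u v"
proof -
  obtain T where ind: "independent V E T"
    and tb: "int (card T) = int (card (nbhd V E T)) + int (card V) - 2 * int (matching_number V E)"
    using assms(2) unfolding tutte_berge_graph_def by blast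
  have "T \<subseteq> V" using ind unfolding independent_def by simp
  then have "D_set V E \<subseteq> T"
    using unmatched_subset_tutte_berge_witness[OF assms(1) _ tb] unfolding D_set_def by blast
  then show ?thesis using ind unfolding independent_def by blast
qed

end
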